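(* Let $p$ be a prime, $m$ a positive integer, let $e,k$ be integers with $e\geq2$ and $1\leq k\leq e-1$, and let $b\ge2$ be an integer. If $0\leq i\leq p^{e-k-1}$ is such that $b+i\leq p^{e-k}$ and $i\leq b$, then $$d_b\big(\mathcal{C}_{p^e-p^{e-k}+i}\big)=p^k(b+i).$$
   Context: For $0\le t\le p^e$, $\mathcal{C}_t$ denotes the cyclic code $\langle (x-1)^t\rangle\subseteq \mathbb{F}_{p^m}[x]/\langle x^{p^e}-1\rangle$, with polynomials identified with their coefficient vectors in $\mathbb{F}_{p^m}^{p^e}$. For $c\in\mathbb{F}_{p^m}^{n}$, $\pi_b(c)$ is the list of the $n$ cyclically consecutive $b$-tuples $(c_j,\dots,c_{j+b-1})$ (indices mod $n$), $d_b(c,c')=d_H(\pi_b(c),\pi_b(c'))$, and $d_b(\mathcal{C})$ is the minimum of $d_b(c,c')$ over distinct $c,c'\in\mathcal{C}$. *)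

theory Defs
  imports "HOL-Computational_Algebra.Polynomial" "HOL-Library.Cardinality"
begin

text \<open>Cyclic code generated by (x-1)^t in F[x]/(x^n - 1); codewords are the
  coefficient vectors (lists of length n) of the residues g*(x-1)^t mod (x^n-1).\<close>
definition cyclic_code :: "nat \<Rightarrow> nat \<Rightarrow> 'a::field list set" where
  "cyclic_code n t =
     {map (coeff ((g * [:-1, 1:] ^ t) mod (monom 1 n - 1))) [0..<n] | g. True}"

definition symbol_read :: "nat \<Rightarrow> 'a list \<Rightarrow> 'a list list" where
  "symbol_read b c =
     map (\<lambda>j. map (\<lambda>l. c ! ((j + l) mod length c)) [0..<b]) [0..<length c]"

definition hamming_dist :: "'a list \<Rightarrow> 'a list \<Rightarrow> nat" where
  "hamming_dist xs ys = card {j. j < length xs \<and> xs ! j \<noteq> ys ! j}"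

definition b_dist :: "nat \<Rightarrow> 'a list \<Rightarrow> 'a list \<Rightarrow> nat" where
  "b_dist b c c' = hamming_dist (symbol_read b c) (symbol_read b c')"

definition min_b_dist :: "nat \<Rightarrow> 'a list set \<Rightarrow> nat" where
  "min_b_dist b C = Inf {b_dist b c c' | c c'. c \<in> C \<and> c' \<in> C \<and> c \<noteq> c'}"

end

theory Submission
  imports Defs "HOL-Number_Theory.Residues"
begin

text \<open>
  Put \<open>q = p^(e-k)\<close> and \<open>N = p^k\<close>. In characteristic \<open>p\<close> we have \<open>(x-1)^q = x^q - 1\<close>, so the
  generator \<open>(x-1)^t\<close>, \<open>t = q(N-1) + i\<close>, equals \<open>(x-1)^i (1 + x^q + \<dots> + x^(q(N-1)))\<close>: every
  codeword of \<open>C_t\<close> is the \<open>N\<close>-fold repetition of a codeword of the length-\<open>q\<close> code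
  \<open>\<langle>(x-1)^i\<rangle>\<close>, and its \<open>b\<close>-distances are \<open>N\<close> times the number of cyclic windows of length \<open>b\<close>
  meeting the support of the difference. That code is invariant under cyclic shifts, so every
  rotation of a nonzero difference \<open>D\<close> still has degree \<open>\<ge> i\<close>: from each point of the support
  there is another one at cyclic distance \<open>\<ge> i\<close>. Hence either all \<open>q \<ge> b + i\<close> windows meet the
  support, or, starting after a run of \<open>b\<close> zeros, the \<open>b\<close> windows ending at the first and the
  \<open>i\<close> windows ending at the last support point are distinct. The generator \<open>(x-1)^i\<close>, supported
  on \<open>[0, i]\<close>, meets exactly \<open>b + i\<close> windows.
\<close>

(* Residues, needed for CHAR_dvd_CARD, brings HOL-Algebra's univariate polynomials into scope. *)
hide_const (open) UnivPoly.monom UnivPoly.coeff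

section \<open>Frobenius in characteristic p\<close>

lemma CHAR_eq_prime_if_CARD_eq_power:
  assumes "prime p" and "CARD('a::{finite,field}) = p ^ m"
  shows "CHAR('a) = p"
proof -
  have "prime CHAR('a)"
    by (rule prime_CHAR_semidom) (simp add: finite_imp_CHAR_pos)
  moreover have "CHAR('a) dvd p ^ m"
    using CHAR_dvd_CARD[where 'a='a] assms(2) by simp
  ultimately show ?thesis
    using assms(1) prime_dvd_power primes_dvd_imp_eq by blast
qed

lemma diff_one_power_CHAR_power:
  fixes x :: "'a::comm_ring_1"
  assumes "prime CHAR('a)"
  shows "(x - 1) ^ (CHAR('a) ^ j) = x ^ (CHAR('a) ^ j) - 1"
proof -
  have "x ^ (CHAR('a) ^ j) = ((x - 1) + 1) ^ (CHAR('a) ^ j)"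
    by simp
  also have "\<dots> = (x - 1) ^ (CHAR('a) ^ j) + 1 ^ (CHAR('a) ^ j)"
    by (rule freshmans_dream'[OF assms refl])
  finally show ?thesis
    by simp
qed

lemma linear_power_CHAR_power:
  assumes "prime CHAR('a::comm_ring_1)"
  shows "([:-1, 1:] :: 'a poly) ^ (CHAR('a) ^ j) = monom 1 (CHAR('a) ^ j) - 1"
proof -
  have "([:-1, 1:] :: 'a poly) = monom 1 1 - 1"
    by (simp add: monom_altdef one_pCons)
  then show ?thesis
    using diff_one_power_CHAR_power[of "monom 1 1 :: 'a poly" j] assms
    by (simp add: monom_power)
qed

section \<open>Codewords of C_t as repetitions\<close>

lemma degree_monom_minus_one: "0 < q \<Longrightarrow> degree (monom 1 q - 1 :: 'a::comm_ring_1 poly) = q"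
  using degree_add_eq_left[of "-1" "monom (1::'a) q"] by (simp add: degree_monom_eq)

lemma degree_mod_monom_minus_one_less:
  assumes "0 < q"
  shows "degree (g mod (monom 1 q - 1 :: 'a::field poly)) < q"
proof -
  have deg: "degree (monom 1 q - 1 :: 'a poly) = q"
    using assms by (rule degree_monom_minus_one)
  then have "monom 1 q - 1 \<noteq> (0 :: 'a poly)"
    using assms by auto
  then show ?thesis
    using degree_mod_less[of "monom 1 q - 1" g] deg assms by auto
qed

lemma coeff_mult_sum_monom:
  fixes R :: "'a::comm_ring_1 poly"
  assumes "degree R < q" and "x < N * q"
  shows "coeff (R * (\<Sum>j<N. monom 1 (q * j))) x = coeff R (x mod q)"
proof -
  have q: "0 < q"
    using assms(2) by (cases q) auto
  have "coeff (R * (\<Sum>j<N. monom 1 (q * j))) x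
      = (\<Sum>j<N. if x < q * j then 0 else coeff R (x - q * j))"
    by (simp add: sum_distrib_left coeff_sum mult.commute[of R] coeff_monom_mult cong: if_cong)
  also have "\<dots> = (\<Sum>j<N. if j = x div q then coeff R (x mod q) else 0)"
  proof (rule sum.cong[OF refl])
    fix j
    have "coeff R (x - q * j) = 0" if "j < x div q"
    proof (rule coeff_eq_0)
      have "q * (j + 1) \<le> q * (x div q)"
        using that by (intro mult_le_mono2) simp
      also have "\<dots> \<le> x"
        by (rule times_div_less_eq_dividend)
      finally have "q * (j + 1) \<le> x" .
      then show "degree R < x - q * j"
        using assms(1) by simp
    qed
    moreover have "x < q * j" if "x div q < j"
      using that q by (simp add: div_less_iff_less_mult mult.commute)
    moreover have "x - q * (x div q) = x mod q"
      by (simp add: minus_mult_div_eq_mod)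
    ultimately show "(if x < q * j then 0 else coeff R (x - q * j))
        = (if j = x div q then coeff R (x mod q) else 0)"
      by (cases "j < x div q"; cases "x div q < j") (auto simp: times_div_less_eq_dividend not_less)
  qed
  also have "\<dots> = coeff R (x mod q)"
    using assms(2) q by (simp add: div_less_iff_less_mult)
  finally show ?thesis .
qed

lemma mod_monom_minus_one_linear_power:
  fixes g :: "'a::field poly"
  assumes hq: "[:-1, 1:] ^ q = (monom 1 q - 1 :: 'a poly)"
    and hn: "[:-1, 1:] ^ (N * q) = (monom 1 (N * q) - 1 :: 'a poly)"
    and "0 < N"
  shows "(g * [:-1, 1:] ^ (q * (N - 1) + i)) mod (monom 1 (N * q) - 1)
       = ((g * [:-1, 1:] ^ i) mod (monom 1 q - 1)) * (\<Sum>j<N. monom 1 (q * j))"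
proof -
  define M where "M = (monom 1 q - 1 :: 'a poly)"
  define S where "S = (\<Sum>j<N. monom 1 (q * j) :: 'a poly)"
  define R where "R = (g * [:-1, 1:] ^ i) mod M"
  have "0 < q"
    using hq by (cases q) auto
  have degM: "degree M = q"
    unfolding M_def using \<open>0 < q\<close> by (rule degree_monom_minus_one)
  have "M \<noteq> 0"
    using degM \<open>0 < q\<close> by auto
  have "M * S = monom 1 (N * q) - 1"
    using power_diff_1_eq[of "monom 1 q :: 'a poly" N]
    by (simp add: M_def S_def monom_power mult.commute)
  also have "\<dots> = M ^ N"
    unfolding M_def hq[symmetric] hn[symmetric] by (simp flip: power_mult add: mult.commute)
  also have "\<dots> = M * M ^ (N - 1)"
    using \<open>0 < N\<close> by (simp flip: power_Suc)
  finally have S: "S = M ^ (N - 1)"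
    using \<open>M \<noteq> 0\<close> by simp
  have "g * [:-1, 1:] ^ (q * (N - 1) + i) = (g * [:-1, 1:] ^ i) * S"
    unfolding S M_def hq[symmetric] by (simp add: power_add power_mult mult_ac)
  also have "\<dots> = ((g * [:-1, 1:] ^ i) div M) * (M * S) + R * S"
    unfolding R_def by (metis div_mult_mod_eq distrib_right mult.assoc)
  also have "M * S = monom 1 (N * q) - 1"
    by fact
  finally have split: "g * [:-1, 1:] ^ (q * (N - 1) + i)
      = ((g * [:-1, 1:] ^ i) div M) * (monom 1 (N * q) - 1) + R * S" .
  have "degree (R * S) < N * q"
  proof (cases "R = 0")
    case False
    have "degree R < q"
      unfolding R_def M_def using \<open>0 < q\<close> by (rule degree_mod_monom_minus_one_less)
    moreover have "degree S = q * (N - 1)"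
      using \<open>M \<noteq> 0\<close> degM by (simp add: S degree_power_eq)
    ultimately show ?thesis
      using degree_mult_le[of R S] \<open>0 < N\<close> by (cases N) (auto simp: algebra_simps)
  qed (use \<open>0 < N\<close> \<open>0 < q\<close> in simp)
  then show ?thesis
    unfolding split
    by (simp add: mod_poly_less hn[symmetric] degree_linear_power mod_mult_self3
        flip: R_def M_def S_def)
qed

definition periodic_word :: "nat \<Rightarrow> nat \<Rightarrow> 'a::zero poly \<Rightarrow> 'a list" where
  "periodic_word n q R = map (\<lambda>x. coeff R (x mod q)) [0..<n]"

text \<open>The \<open>N\<close>-fold repetition of the length-\<open>q\<close> cyclic code \<open>\<langle>(x-1)^i\<rangle>\<close>.\<close>
definition repeated_cyclic_code :: "nat \<Rightarrow> nat \<Rightarrow> nat \<Rightarrow> 'a::field list set" where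
  "repeated_cyclic_code N q i =
     {periodic_word (N * q) q ((g * [:-1, 1:] ^ i) mod (monom 1 q - 1)) | g. True}"

lemma cyclic_code_eq_repeated_cyclic_code:
  assumes hq: "[:-1, 1:] ^ q = (monom 1 q - 1 :: 'a::field poly)"
    and hn: "[:-1, 1:] ^ (N * q) = (monom 1 (N * q) - 1 :: 'a poly)"
    and "0 < N"
  shows "(cyclic_code (N * q) (q * (N - 1) + i) :: 'a list set) = repeated_cyclic_code N q i"
proof -
  have "0 < q"
    using hq by (cases q) auto
  then have "map (coeff (((g * [:-1, 1:] ^ i) mod (monom 1 q - 1)) * (\<Sum>j<N. monom 1 (q * j))))
      [0..<N * q] = periodic_word (N * q) q ((g * [:-1, 1:] ^ i) mod (monom 1 q - 1))"
    for g :: "'a poly"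
    unfolding periodic_word_def
    by (intro map_cong refl) (simp add: coeff_mult_sum_monom degree_mod_monom_minus_one_less)
  then show ?thesis
    unfolding cyclic_code_def repeated_cyclic_code_def mod_monom_minus_one_linear_power[OF hq hn \<open>0 < N\<close>]
    by simp
qed

definition b_symbol_weight :: "nat \<Rightarrow> nat \<Rightarrow> 'a::zero poly \<Rightarrow> nat" where
  "b_symbol_weight b q D = card {j. j < q \<and> (\<exists>l<b. coeff D ((j + l) mod q) \<noteq> 0)}"

lemma card_mod_periodic:
  fixes q N :: nat
  assumes "0 < q"
  shows "card {j. j < N * q \<and> P (j mod q)} = N * card {r. r < q \<and> P r}"
proof -
  define h where "h = (\<lambda>(a, r). a * q + r)"
  have "{j. j < N * q \<and> P (j mod q)} = h ` ({..<N} \<times> {r. r < q \<and> P r})"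
  proof (intro equalityI subsetI)
    fix j
    assume "j \<in> {j. j < N * q \<and> P (j mod q)}"
    moreover have "j = h (j div q, j mod q)"
      by (simp add: h_def)
    ultimately show "j \<in> h ` ({..<N} \<times> {r. r < q \<and> P r})"
      using assms by (force simp: div_less_iff_less_mult)
  next
    fix j
    assume "j \<in> h ` ({..<N} \<times> {r. r < q \<and> P r})"
    then obtain a r where "a < N" "r < q" "P r" "j = a * q + r"
      by (auto simp: h_def)
    have "a * q + r < Suc a * q"
      using \<open>r < q\<close> by simp
    also have "\<dots> \<le> N * q"
      using \<open>a < N\<close> by (intro mult_le_mono1) simp
    finally have "a * q + r < N * q" .
    with \<open>P r\<close> \<open>j = a * q + r\<close> \<open>r < q\<close>
    show "j \<in> {j. j < N * q \<and> P (j mod q)}"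
      by simp
  qed
  moreover have "inj_on h ({..<N} \<times> {r. r < q \<and> P r})"
    by (rule inj_onI)
      (auto simp: h_def dest: arg_cong[where f="\<lambda>x. x div q"] arg_cong[where f="\<lambda>x. x mod q"])
  ultimately show ?thesis
    by (simp add: card_image card_cartesian_product)
qed

lemma b_dist_periodic_word:
  fixes R R' :: "'a::ab_group_add poly"
  assumes "0 < q"
  shows "b_dist b (periodic_word (N * q) q R) (periodic_word (N * q) q R')
       = N * b_symbol_weight b q (R - R')"
proof -
  let ?c = "periodic_word (N * q) q R" and ?c' = "periodic_word (N * q) q R'"
  define P where "P r \<longleftrightarrow> (\<exists>l<b. coeff (R - R') ((r + l) mod q) \<noteq> 0)" for r
  have "symbol_read b ?c ! j \<noteq> symbol_read b ?c' ! j \<longleftrightarrow> P (j mod q)" if "j < N * q" for j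
  proof -
    have "(j + l) mod (N * q) < N * q" and "(j + l) mod (N * q) mod q = (j mod q + l) mod q" for l
      using that by (simp_all add: mod_mod_cancel mod_add_left_eq) (metis mod_less_divisor not_gr0 not_less0)
    then have "?c ! ((j + l) mod (N * q)) = coeff R ((j mod q + l) mod q)"
      and "?c' ! ((j + l) mod (N * q)) = coeff R' ((j mod q + l) mod q)" for l
      by (simp_all add: periodic_word_def)
    then show ?thesis
      using that by (auto simp: symbol_read_def periodic_word_def P_def)
  qed
  moreover have "length (symbol_read b ?c) = N * q"
    by (simp add: symbol_read_def periodic_word_def)
  ultimately have "{j. j < length (symbol_read b ?c) \<and> symbol_read b ?c ! j \<noteq> symbol_read b ?c' ! j}
      = {j. j < N * q \<and> P (j mod q)}"
    by auto
  then show ?thesis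
    using card_mod_periodic[OF assms, of N P]
    by (simp add: b_dist_def hamming_dist_def b_symbol_weight_def P_def)
qed

section \<open>Cyclic rotations\<close>

text \<open>For \<open>degree D < q\<close> this is \<open>x^(q-a) D mod (x^q - 1)\<close>: the coefficients of \<open>D\<close> rotated by \<open>a\<close>.\<close>
definition cyclic_rotation :: "nat \<Rightarrow> nat \<Rightarrow> 'a::comm_semiring_1 poly \<Rightarrow> 'a poly" where
  "cyclic_rotation q a D = poly_shift a D + monom 1 (q - a) * poly_cutoff a D"

lemma coeff_cyclic_rotation:
  assumes "degree D < q" and "a < q"
  shows "coeff (cyclic_rotation q a D) x = (if x < q then coeff D ((x + a) mod q) else 0)"
proof -
  have "coeff (cyclic_rotation q a D) x
      = coeff D (x + a) + (if x < q - a then 0 else if x - (q - a) < a then coeff D (x - (q - a)) else 0)"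
    by (simp add: cyclic_rotation_def coeff_poly_cutoff coeff_poly_shift coeff_monom_mult)
  moreover have "coeff D (x + a) = 0" if "q - a \<le> x"
    using that assms by (intro coeff_eq_0) simp
  moreover have "(x + a) mod q = x - (q - a)" if "q - a \<le> x" "x < q"
    using that assms by (simp add: le_mod_geq)
  ultimately show ?thesis
    using assms by (auto intro: coeff_eq_0)
qed

lemma monom_mult_eq_cyclic_rotation:
  fixes D :: "'a::comm_ring_1 poly"
  assumes "a \<le> q"
  shows "monom 1 (q - a) * D = cyclic_rotation q a D + (monom 1 q - 1) * poly_shift a D"
proof -
  have "D = poly_cutoff a D + monom 1 a * poly_shift a D"
    by (rule poly_eqI) (simp add: coeff_poly_cutoff coeff_poly_shift coeff_monom_mult)
  moreover have "monom 1 (q - a) * monom 1 a = (monom 1 q :: 'a poly)"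
    using assms by (simp add: mult_monom)
  ultimately have "monom 1 (q - a) * D = monom 1 (q - a) * poly_cutoff a D + monom 1 q * poly_shift a D"
    by (metis distrib_left mult.assoc)
  then show ?thesis
    by (simp add: cyclic_rotation_def algebra_simps)
qed

lemma dvd_cyclic_rotation:
  fixes f D :: "'a::comm_ring_1 poly"
  assumes "f dvd D" and "f dvd monom 1 q - 1" and "a \<le> q"
  shows "f dvd cyclic_rotation q a D"
proof -
  have "cyclic_rotation q a D = monom 1 (q - a) * D - (monom 1 q - 1) * poly_shift a D"
    using monom_mult_eq_cyclic_rotation[OF assms(3), of D] by (simp add: algebra_simps)
  then show ?thesis
    using assms(1,2) by (simp add: dvd_diff)
qed

lemma exists_distant_nonzero_coeff:
  fixes f D :: "'a::idom poly"
  assumes "D \<noteq> 0" and "degree D < q" and "f dvd D" and "f dvd monom 1 q - 1" and "a < q"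
  shows "\<exists>x<q. degree f \<le> x \<and> coeff D ((a + x) mod q) \<noteq> 0"
proof -
  define E where "E = cyclic_rotation q a D"
  have coeff_E: "coeff E x = (if x < q then coeff D ((x + a) mod q) else 0)" for x
    unfolding E_def using assms(2,5) by (rule coeff_cyclic_rotation)
  have "(degree D + q - a) mod q < q" and "((degree D + q - a) mod q + a) mod q = degree D"
    using assms(2,5) by (simp_all add: mod_add_left_eq)
  then have "coeff E ((degree D + q - a) mod q) \<noteq> 0"
    using assms(1) by (simp add: coeff_E)
  then have "E \<noteq> 0"
    by auto
  then have "coeff E (degree E) \<noteq> 0"
    by simp
  then have "degree E < q" and "coeff D ((a + degree E) mod q) \<noteq> 0"
    by (auto simp: coeff_E add.commute split: if_splits)
  moreover have "degree f \<le> degree E"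
    using dvd_cyclic_rotation[OF assms(3,4)] assms(5) \<open>E \<noteq> 0\<close>
    by (simp add: E_def dvd_imp_degree_le)
  ultimately show ?thesis
    by blast
qed

section \<open>Counting windows that meet the support\<close>

lemma card_windows_meeting_ge:
  fixes A :: "nat set"
  assumes "A \<subseteq> {b..<q}" and "a0 \<in> A" and "a1 \<in> A" and "a0 + i \<le> a1" and "i \<le> b"
  shows "b + i \<le> card {j. j < q \<and> (\<exists>l<b. j + l \<in> A)}"
proof -
  define W where "W = {a0 + 1 - b..a0} \<union> {a1 + 1 - i..a1}"
  have "b \<le> a0" and "a1 < q"
    using assms(1-3) by auto
  have "W \<subseteq> {j. j < q \<and> (\<exists>l<b. j + l \<in> A)}"
  proof (intro subsetI CollectI conjI)
    fix j
    assume j: "j \<in> W"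
    then show "j < q"
      using assms(4) \<open>a1 < q\<close> by (auto simp: W_def)
    show "\<exists>l<b. j + l \<in> A"
    proof (cases "j \<le> a0")
      case True
      with j assms(4) have "a0 - j < b"
        by (auto simp: W_def)
      with True show ?thesis
        using assms(2) by (intro exI[of _ "a0 - j"]) auto
    next
      case False
      with j assms(5) have "a1 - j < b" and "j \<le> a1"
        by (auto simp: W_def)
      then show ?thesis
        using assms(3) by (intro exI[of _ "a1 - j"]) auto
    qed
  qed
  moreover have "card W = b + i"
    unfolding W_def using assms(4) \<open>b \<le> a0\<close> by (subst card_Un_disjoint) auto
  ultimately show ?thesis
    using card_mono[of "{j. j < q \<and> (\<exists>l<b. j + l \<in> A)}" W] by simp
qed

lemma Min_add_le_Max_if_cyclically_far:
  fixes A :: "nat set"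
  assumes "finite A" and "A \<noteq> {}" and "A \<subseteq> {..<q}"
    and far: "\<And>a. a \<in> A \<Longrightarrow> \<exists>x<q. i \<le> x \<and> (a + x) mod q \<in> A"
  shows "Min A + i \<le> Max A"
proof -
  obtain x where "x < q" and "i \<le> x" and x: "(Min A + x) mod q \<in> A"
    using far Min_in[OF assms(1,2)] by blast
  show ?thesis
  proof (cases "Min A + x < q")
    case True
    then show ?thesis
      using x \<open>i \<le> x\<close> Max_ge[OF assms(1)] by fastforce
  next
    case False
    moreover have "Min A < q"
      using Min_in[OF assms(1,2)] assms(3) by auto
    ultimately have "(Min A + x) mod q < Min A"
      using \<open>x < q\<close> by (simp add: le_mod_geq)
    then show ?thesis
      using x Min_le[OF assms(1)] by fastforce
  qed
qed

lemma card_cyclic_windows_meeting_ge: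
  fixes f :: "nat \<Rightarrow> bool"
  assumes "b + i \<le> q" and "i \<le> b" and "\<exists>x<q. f x"
    and far: "\<And>a. a < q \<Longrightarrow> f a \<Longrightarrow> \<exists>x<q. i \<le> x \<and> f ((a + x) mod q)"
  shows "b + i \<le> card {j. j < q \<and> (\<exists>l<b. f ((j + l) mod q))}"
proof (cases "\<forall>j<q. \<exists>l<b. f ((j + l) mod q)")
  case True
  then have "{j. j < q \<and> (\<exists>l<b. f ((j + l) mod q))} = {..<q}"
    by auto
  then show ?thesis
    using assms(1) by simp
next
  case False
  then obtain j0 where "j0 < q" and gap: "\<And>l. l < b \<Longrightarrow> \<not> f ((j0 + l) mod q)"
    by auto
  define A where "A = {x. x < q \<and> f ((j0 + x) mod q)}"
  have "A \<subseteq> {b..<q}"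
    using gap by (auto simp: A_def not_less[symmetric])
  obtain y where "y < q" and "f y"
    using assms(3) by blast
  have "(j0 + (y + q - j0) mod q) mod q = y"
    using \<open>j0 < q\<close> \<open>y < q\<close> by (simp add: mod_add_right_eq)
  then have "(y + q - j0) mod q \<in> A"
    using \<open>f y\<close> \<open>y < q\<close> by (simp add: A_def)
  then have "finite A" and "A \<noteq> {}"
    by (auto simp: A_def)
  have "\<exists>x<q. i \<le> x \<and> (a + x) mod q \<in> A" if "a \<in> A" for a
  proof -
    have "(j0 + a) mod q < q" and "f ((j0 + a) mod q)"
      using that \<open>j0 < q\<close> by (auto simp: A_def)
    then obtain x where "x < q" and "i \<le> x" and "f (((j0 + a) mod q + x) mod q)"
      using far by blast
    then show ?thesis
      using \<open>j0 < q\<close> by (auto simp: A_def mod_add_left_eq mod_add_right_eq add.assoc)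
  qed
  then have "Min A + i \<le> Max A"
    using \<open>A \<subseteq> {b..<q}\<close> by (intro Min_add_le_Max_if_cyclically_far[OF \<open>finite A\<close> \<open>A \<noteq> {}\<close>]) auto
  then have "b + i \<le> card {j. j < q \<and> (\<exists>l<b. j + l \<in> A)}"
    using \<open>finite A\<close> \<open>A \<noteq> {}\<close> assms(2)
    by (intro card_windows_meeting_ge[OF \<open>A \<subseteq> {b..<q}\<close>]) auto
  also have "\<dots> \<le> card {j. j < q \<and> (\<exists>l<b. f ((j + l) mod q))}"
  proof (rule card_inj_on_le)
    show "inj_on (\<lambda>j. (j0 + j) mod q) {j. j < q \<and> (\<exists>l<b. j + l \<in> A)}"
      by (rule inj_onI) (use cong_add_lcancel_nat[of j0 _ _ q] in \<open>auto simp: cong_def\<close>)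
    show "(\<lambda>j. (j0 + j) mod q) ` {j. j < q \<and> (\<exists>l<b. j + l \<in> A)}
        \<subseteq> {j. j < q \<and> (\<exists>l<b. f ((j + l) mod q))}"
      using \<open>j0 < q\<close> by (auto simp: A_def mod_add_left_eq add.assoc)
  qed simp
  finally show ?thesis .
qed

lemma b_symbol_weight_ge:
  fixes f D :: "'a::idom poly"
  assumes "D \<noteq> 0" and "degree D < q" and "f dvd D" and "f dvd monom 1 q - 1"
    and "b + degree f \<le> q" and "degree f \<le> b"
  shows "b + degree f \<le> b_symbol_weight b q D"
  unfolding b_symbol_weight_def
proof (rule card_cyclic_windows_meeting_ge)
  show "\<exists>x<q. coeff D x \<noteq> 0"
    using assms(1,2) by (intro exI[of _ "degree D"]) simp
  show "\<exists>x<q. degree f \<le> x \<and> coeff D ((a + x) mod q) \<noteq> 0" if "a < q" for a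
    using exists_distant_nonzero_coeff[OF assms(1-4) that] .
qed (use assms(5,6) in auto)

lemma b_symbol_weight_le:
  assumes "0 < b" and "degree D \<le> i"
  shows "b_symbol_weight b q D \<le> b + i"
proof -
  have "{j. j < q \<and> (\<exists>l<b. coeff D ((j + l) mod q) \<noteq> 0)} \<subseteq> {..i} \<union> {q + 1 - b..<q}"
  proof
    fix j
    assume "j \<in> {j. j < q \<and> (\<exists>l<b. coeff D ((j + l) mod q) \<noteq> 0)}"
    then obtain l where "j < q" and "l < b" and "coeff D ((j + l) mod q) \<noteq> 0"
      by blast
    then have "(j + l) mod q \<le> i"
      using assms(2) le_degree[of D "(j + l) mod q"] by simp
    then show "j \<in> {..i} \<union> {q + 1 - b..<q}"
      using \<open>j < q\<close> \<open>l < b\<close> by (cases "j + l < q") auto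
  qed
  then have "b_symbol_weight b q D \<le> card ({..i} \<union> {q + 1 - b..<q})"
    unfolding b_symbol_weight_def by (rule card_mono[rotated]) simp
  also have "\<dots> \<le> card {..i} + card {q + 1 - b..<q}"
    by (rule card_Un_le)
  also have "\<dots> \<le> b + i"
    using assms(1) by simp
  finally show ?thesis .
qed

lemma min_b_dist_eqI:
  assumes "c \<in> C" and "c' \<in> C" and "c \<noteq> c'" and "b_dist b c c' = d"
    and "\<And>c c'. c \<in> C \<Longrightarrow> c' \<in> C \<Longrightarrow> c \<noteq> c' \<Longrightarrow> d \<le> b_dist b c c'"
  shows "min_b_dist b C = d"
  unfolding min_b_dist_def by (rule cInf_eq_minimum) (use assms in blast)+

lemma b_dist_repeated_cyclic_code_ge:
  fixes c c' :: "'a::field list"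
  assumes hq: "[:-1, 1:] ^ q = (monom 1 q - 1 :: 'a poly)"
    and "b + i \<le> q" and "i \<le> b"
    and "c \<in> repeated_cyclic_code N q i" and "c' \<in> repeated_cyclic_code N q i" and "c \<noteq> c'"
  shows "N * (b + i) \<le> b_dist b c c'"
proof -
  define R where "R g = (g * [:-1, 1:] ^ i) mod (monom 1 q - 1 :: 'a poly)" for g
  obtain g g' where c: "c = periodic_word (N * q) q (R g)" and c': "c' = periodic_word (N * q) q (R g')"
    using assms(4,5) by (auto simp: repeated_cyclic_code_def R_def)
  have "0 < q"
    using hq by (cases q) auto
  have dvd_M: "[:-1, 1:] ^ i dvd (monom 1 q - 1 :: 'a poly)"
    unfolding hq[symmetric] using assms(2) by (simp add: le_imp_power_dvd)
  have "R g - R g' \<noteq> 0"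
    using \<open>c \<noteq> c'\<close> by (auto simp: c c')
  moreover have "degree (R g - R g') < q"
    using \<open>0 < q\<close> by (intro degree_diff_less) (simp_all add: R_def degree_mod_monom_minus_one_less)
  moreover have "[:-1, 1:] ^ i dvd R g - R g'"
    unfolding R_def by (intro dvd_diff dvd_mod dvd_M dvd_mult) simp_all
  ultimately have "b + degree ([:-1, 1:] ^ i :: 'a poly) \<le> b_symbol_weight b q (R g - R g')"
    using dvd_M assms(2,3) by (intro b_symbol_weight_ge) (simp_all add: degree_linear_power)
  then show ?thesis
    unfolding c c' b_dist_periodic_word[OF \<open>0 < q\<close>] by (simp add: degree_linear_power)
qed

lemma min_b_dist_repeated_cyclic_code:
  assumes hq: "[:-1, 1:] ^ q = (monom 1 q - 1 :: 'a::field poly)"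
    and "0 < N" and "0 < b" and "b + i \<le> q" and "i \<le> b"
  shows "min_b_dist b (repeated_cyclic_code N q i :: 'a list set) = N * (b + i)"
proof -
  let ?c = "periodic_word (N * q) q ([:-1, 1:] ^ i :: 'a poly)" and ?c' = "periodic_word (N * q) q (0 :: 'a poly)"
  have "0 < q" and "i < q"
    using assms(3-5) by auto
  then have "degree ([:-1, 1:] ^ i :: 'a poly) < degree (monom 1 q - 1 :: 'a poly)"
    by (simp only: degree_linear_power degree_monom_minus_one)
  then have "[:-1, 1:] ^ i = (1 * [:-1, 1:] ^ i) mod (monom 1 q - 1 :: 'a poly)"
    and "0 = (0 * [:-1, 1:] ^ i) mod (monom 1 q - 1 :: 'a poly)"
    by (simp_all add: mod_poly_less)
  then have "?c \<in> repeated_cyclic_code N q i" and "?c' \<in> repeated_cyclic_code N q i"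
    unfolding repeated_cyclic_code_def by (metis (mono_tags, lifting) mem_Collect_eq)+
  moreover have "?c \<noteq> ?c'"
  proof -
    have "coeff ([:-1, 1:] ^ i :: 'a poly) i = 1"
      using lead_coeff_power[of "[:-1, 1:] :: 'a poly" i] by (simp add: degree_linear_power)
    moreover have "i < N * q"
      using \<open>i < q\<close> \<open>0 < N\<close> by (simp add: less_le_trans)
    ultimately show ?thesis
      unfolding periodic_word_def using \<open>i < q\<close> by (auto intro!: bexI[of _ i])
  qed
  moreover have "b_dist b ?c ?c' \<le> N * (b + i)"
    unfolding b_dist_periodic_word[OF \<open>0 < q\<close>]
    using b_symbol_weight_le[OF \<open>0 < b\<close>, of "[:-1, 1:] ^ i" i q] \<open>0 < N\<close>
    by (simp add: degree_linear_power)
  ultimately show ?thesis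
    using b_dist_repeated_cyclic_code_ge[OF hq assms(4,5)]
    by (intro min_b_dist_eqI) (auto intro: antisym)
qed

theorem theorem2p10:
  fixes p m e k b i :: nat
  assumes "prime p" and "m > 0"
    and "CARD('a) = p ^ m"
    and "e \<ge> 2" and "1 \<le> k" and "k \<le> e - 1"
    and "b \<ge> 2"
    and "i \<le> p ^ (e - k - 1)" and "b + i \<le> p ^ (e - k)" and "i \<le> b"
  shows "min_b_dist b (cyclic_code (p ^ e) (p ^ e - p ^ (e - k) + i) :: ('a::{finite, field}) list set)
         = p ^ k * (b + i)"
proof -
  define q N where "q = p ^ (e - k)" and "N = p ^ k"
  have "p ^ e = N * q"
    using assms(6) by (simp add: N_def q_def flip: power_add)
  have "CHAR('a) = p"
    using assms(1,3) by (rule CHAR_eq_prime_if_CARD_eq_power)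
  then have frobenius: "[:-1, 1:] ^ (p ^ j) = (monom 1 (p ^ j) - 1 :: 'a poly)" for j
    using linear_power_CHAR_power[where 'a='a] assms(1) by simp
  have hq: "[:-1, 1:] ^ q = (monom 1 q - 1 :: 'a poly)"
    unfolding q_def by (rule frobenius)
  have hn: "[:-1, 1:] ^ (N * q) = (monom 1 (N * q) - 1 :: 'a poly)"
    using frobenius[of e] \<open>p ^ e = N * q\<close> by simp
  have "0 < N"
    using assms(1) by (simp add: N_def prime_gt_0_nat)
  have t: "N * q - q + i = q * (N - 1) + i"
    by (simp add: diff_mult_distrib2 mult.commute)
  show ?thesis
    unfolding q_def[symmetric] N_def[symmetric] \<open>p ^ e = N * q\<close> t
      cyclic_code_eq_repeated_cyclic_code[OF hq hn \<open>0 < N\<close>]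
    by (rule min_b_dist_repeated_cyclic_code[OF hq \<open>0 < N\<close>]) (use assms(7,9,10) q_def in auto)
qed

end
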